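(* Let $g$ be a polynomial of degree at least one, let $A\subset\mathbb{C}$ be compact, and let $B\subset PH(A)$ satisfy $g(B)\subset B$. Then $B\subset PH(g^{-1}(A))$. In particular, if $g\in G\in\mathcal{G}$ and $P^*(G)\subset PH(A)$ where $A\subset\mathbb{C}$ is compact, then $P^*(G)\subset PH(g^{-1}(A))$.
   Context: For compact $A\subset\mathbb{C}$, the polynomial hull $PH(A)$ is the union of $A$ and all bounded components of $\mathbb{C}\setminus A$. A polynomial semigroup is a semigroup of non-constant complex polynomials (self-maps of $\hat{\mathbb{C}}$) under composition. $P(G)$ is the closure in $\hat{\mathbb{C}}$ of the set of all critical values of all $g\in G$, and $P^*(G)=P(G)\setminus\{\infty\}$. $\mathcal{G}$: polynomial semigroups all of whose elements have degree $\ge2$ and with $P^*(G)$ bounded in $\mathbb{C}$. *)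

theory Defs
  imports "HOL-Analysis.Analysis" "HOL-Computational_Algebra.Polynomial"
begin

definition PH :: "complex set \<Rightarrow> complex set" where
  "PH A = A \<union> \<Union>{C. C \<in> components (- A) \<and> bounded C}"

definition poly_semigroup :: "complex poly set \<Rightarrow> bool" where
  "poly_semigroup G \<longleftrightarrow> (\<forall>g\<in>G. degree g \<ge> 1) \<and> (\<forall>f\<in>G. \<forall>g\<in>G. pcompose f g \<in> G)"

text \<open>Finite critical values of elements of G; the only other critical value of a polynomial
  of degree at least 2 (as a self-map of the Riemann sphere) is infinity.\<close>
definition finite_crit_values :: "complex poly set \<Rightarrow> complex set" where
  "finite_crit_values G = {poly g z | g z. g \<in> G \<and> poly (pderiv g) z = 0}"

text \<open>P^*(G) = P(G) minus infinity, which equals the closure in C of the finite critical values.\<close>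
definition Pstar :: "complex poly set \<Rightarrow> complex set" where
  "Pstar G = closure (finite_crit_values G)"

definition classG :: "complex poly set set" where
  "classG = {G. poly_semigroup G \<and> (\<forall>g\<in>G. degree g \<ge> 2) \<and> bounded (Pstar G)}"

end

theory Submission
  imports Defs
begin

text \<open>If z \<in> B lay outside PH(g\<inverse>(A)), its component U in the complement of g\<inverse>(A) would be
  unbounded. But g(U) is connected, misses A and contains g(z) \<in> B \<subseteq> PH(A), so it lies in the
  bounded component of -A through g(z); as a polynomial of positive degree is proper, U is
  bounded after all. The second claim follows because the
  closure of the critical values of a semigroup is forward invariant under each of its elements.\<close>

lemma bounded_of_bounded_image_at_infinity:
  fixes f :: "'a::real_normed_vector \<Rightarrow> 'b::real_normed_vector"
  assumes "filterlim f at_infinity at_infinity" "bounded (f ` U)"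
  shows "bounded U"
proof -
  obtain M where M: "\<And>x. x \<in> U \<Longrightarrow> norm (f x) \<le> M"
    using assms(2) unfolding bounded_iff by auto
  have "eventually (\<lambda>x. max M 0 + 1 \<le> norm (f x)) at_infinity"
    using assms(1) filterlim_at_infinity[of 0 f at_infinity] by auto
  then obtain R where R: "\<And>x. norm x \<ge> R \<Longrightarrow> max M 0 + 1 \<le> norm (f x)"
    unfolding eventually_at_infinity by auto
  have "norm x \<le> R" if "x \<in> U" for x
    using M[OF that] R[of x] by (cases "norm x \<ge> R") auto
  then show ?thesis unfolding bounded_iff by auto
qed

lemma mem_PH_iff: "z \<in> PH A \<longleftrightarrow> z \<in> A \<or> bounded (connected_component_set (- A) z)"
proof (cases "z \<in> A")
  case False
  have "C = connected_component_set (- A) z" if "C \<in> components (- A)" "z \<in> C" for C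
    using that by (metis components_iff connected_component_eq)
  moreover have "connected_component_set (- A) z \<in> components (- A)"
    using False by (auto simp: components_def)
  moreover have "z \<in> connected_component_set (- A) z"
    using False by simp
  ultimately show ?thesis
    unfolding PH_def by blast
qed (simp add: PH_def)

lemma forward_invariant_subset_PH_vimage:
  fixes f :: "complex \<Rightarrow> complex"
  assumes f: "continuous_on UNIV f" "filterlim f at_infinity at_infinity"
    and B: "B \<subseteq> PH A" "f ` B \<subseteq> B"
  shows "B \<subseteq> PH (f -` A)"
proof
  fix z assume "z \<in> B"
  show "z \<in> PH (f -` A)"
  proof (rule ccontr)
    define U where "U = connected_component_set (- (f -` A)) z"
    assume "z \<notin> PH (f -` A)"
    then have "f z \<notin> A" and U_unbounded: "\<not> bounded U"
      unfolding U_def mem_PH_iff by auto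
    have "f z \<in> PH A" using \<open>z \<in> B\<close> B by auto
    then have bounded_component: "bounded (connected_component_set (- A) (f z))"
      using \<open>f z \<notin> A\<close> by (simp add: mem_PH_iff)
    have "connected (f ` U)"
      unfolding U_def
      by (intro connected_continuous_image connected_connected_component
          continuous_on_subset[OF f(1) subset_UNIV])
    moreover have "f ` U \<subseteq> - A"
      using connected_component_subset[of "- (f -` A)" z] unfolding U_def by blast
    moreover have "f z \<in> f ` U"
      using \<open>f z \<notin> A\<close> unfolding U_def by auto
    ultimately have "f ` U \<subseteq> connected_component_set (- A) (f z)"
      by (intro connected_component_maximal)
    then have "bounded (f ` U)"
      using bounded_component by (rule bounded_subset[rotated])
    then have "bounded U"
      using f(2) by (rule bounded_of_bounded_image_at_infinity[rotated])
    then show False using U_unbounded by contradiction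
  qed
qed

lemma poly_subset_PH_vimage:
  fixes g :: "complex poly"
  assumes "degree g \<ge> 1" "B \<subseteq> PH A" "poly g ` B \<subseteq> B"
  shows "B \<subseteq> PH (poly g -` A)"
proof (rule forward_invariant_subset_PH_vimage)
  show "continuous_on UNIV (poly g)" by (rule continuous_on_poly[OF continuous_on_id])
  show "filterlim (poly g) at_infinity at_infinity"
    using assms(1) by (intro filterlim_poly_at_infinity) simp
qed (use assms in auto)

lemma poly_image_finite_crit_values_subset:
  assumes "poly_semigroup G" "g \<in> G"
  shows "poly g ` finite_crit_values G \<subseteq> finite_crit_values G"
proof
  fix w assume "w \<in> poly g ` finite_crit_values G"
  then obtain h z where hz: "h \<in> G" "poly (pderiv h) z = 0" "w = poly g (poly h z)"
    unfolding finite_crit_values_def by auto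
  have "pcompose g h \<in> G" using assms hz(1) unfolding poly_semigroup_def by auto
  moreover have "poly (pderiv (pcompose g h)) z = 0"
    using hz(2) by (simp add: pderiv_pcompose)
  moreover have "w = poly (pcompose g h) z" using hz(3) by (simp add: poly_pcompose)
  ultimately show "w \<in> finite_crit_values G" unfolding finite_crit_values_def by blast
qed

lemma poly_image_Pstar_subset:
  assumes "poly_semigroup G" "g \<in> G"
  shows "poly g ` Pstar G \<subseteq> Pstar G"
  unfolding Pstar_def
  using poly_image_finite_crit_values_subset[OF assms] closure_subset
  by (intro image_closure_subset) (auto intro: continuous_intros)

theorem lemma2p5:
  shows "(\<forall>(g::complex poly) (A::complex set) (B::complex set).
            degree g \<ge> 1 \<and> compact A \<and> B \<subseteq> PH A \<and> poly g ` B \<subseteq> B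
            \<longrightarrow> B \<subseteq> PH (poly g -` A))
       \<and> (\<forall>(g::complex poly) (G::complex poly set) (A::complex set).
            g \<in> G \<and> G \<in> classG \<and> compact A \<and> Pstar G \<subseteq> PH A
            \<longrightarrow> Pstar G \<subseteq> PH (poly g -` A))"
proof (intro conjI allI impI)
  fix g :: "complex poly" and A B :: "complex set"
  assume "degree g \<ge> 1 \<and> compact A \<and> B \<subseteq> PH A \<and> poly g ` B \<subseteq> B"
  then show "B \<subseteq> PH (poly g -` A)" by (intro poly_subset_PH_vimage) auto
next
  fix g :: "complex poly" and G A
  assume g: "g \<in> G \<and> G \<in> classG \<and> compact A \<and> Pstar G \<subseteq> PH A"
  then have "degree g \<ge> 1" "poly_semigroup G" unfolding classG_def by auto
  moreover have "poly g ` Pstar G \<subseteq> Pstar G"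
    using g \<open>poly_semigroup G\<close> by (intro poly_image_Pstar_subset) auto
  ultimately show "Pstar G \<subseteq> PH (poly g -` A)"
    using g by (intro poly_subset_PH_vimage) auto
qed

end
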